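(* Lattices $U+A_2+D_4+E_8$, $U+A_2+2D_4$, and $U+E_6(2)$ are achiral.
   Context: $U$ hyperbolic plane, $A_n,D_n,E_n$ positive definite root lattices, $(2)$ multiplies the form by 2, $+$ orthogonal sum. For an even hyperbolic lattice $\mathbb L$ with $\operatorname{discr}_3\mathbb L=\mathbb Z/3$ and $\operatorname{discr}_2$ of period 2: $W$ is generated by reflections in 2-roots ($v^2=2$) and 6-roots ($v^2=6$, $v\cdot\mathbb L\subset3\mathbb Z$); cells $P$ are fundamental chambers of $W$ in the hyperbolic space, each lifting to $\pm P^\#$ in the double cover. An automorphism is $P$-direct if it preserves $P^\#$, $\mathbb Z/3$-reversing if it acts as $-\operatorname{id}$ on $\operatorname{discr}_3\mathbb L$. $\mathbb L$ is achiral if it admits an automorphism that is $\mathbb Z/3$-reversing and $P$-direct for some cell $P$. *)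

theory Defs
  imports "HOL-Analysis.Analysis"
begin

text \<open>A lattice of rank n is Z^n with a bilinear form given by an integer Gram matrix,
  represented as a list of n rows (type int list list). Vectors of the ambient real space
  R^n are functions nat \<Rightarrow> real vanishing at indices \<ge> n (with the product topology,
  which on this subspace is the Euclidean topology).\<close>

definition gram :: "int list list \<Rightarrow> nat \<Rightarrow> nat \<Rightarrow> int" where
  "gram M i j = (if i < length M \<and> j < length (M ! i) then M ! i ! j else 0)"

definition rk :: "int list list \<Rightarrow> nat" where
  "rk M = length M"

definition Vsp :: "nat \<Rightarrow> (nat \<Rightarrow> real) set" where
  "Vsp n = {x. \<forall>i\<ge>n. x i = 0}"

definition lat :: "nat \<Rightarrow> (nat \<Rightarrow> real) set" where
  "lat n = {x \<in> Vsp n. \<forall>i<n. x i \<in> \<int>}"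

definition bil :: "int list list \<Rightarrow> (nat \<Rightarrow> real) \<Rightarrow> (nat \<Rightarrow> real) \<Rightarrow> real" where
  "bil M x y = (\<Sum>i<rk M. \<Sum>j<rk M. of_int (gram M i j) * x i * y j)"

text \<open>Dual lattice L^* and the 3-primary part of the discriminant group L^*/L
  (represented by elements of L^* some 3-power multiple of which lies in L).\<close>

definition dual_lat :: "int list list \<Rightarrow> (nat \<Rightarrow> real) set" where
  "dual_lat M = {x \<in> Vsp (rk M). \<forall>v \<in> lat (rk M). bil M x v \<in> \<int>}"

definition discr3_reps :: "int list list \<Rightarrow> (nat \<Rightarrow> real) set" where
  "discr3_reps M = {x \<in> dual_lat M. \<exists>k::nat. (\<lambda>i. 3 ^ k * x i) \<in> lat (rk M)}"

definition act :: "nat \<Rightarrow> (nat \<Rightarrow> nat \<Rightarrow> int) \<Rightarrow> (nat \<Rightarrow> real) \<Rightarrow> (nat \<Rightarrow> real)" where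
  "act n g x = (\<lambda>i. if i < n then (\<Sum>j<n. of_int (g i j) * x j) else 0)"

definition is_aut :: "int list list \<Rightarrow> (nat \<Rightarrow> nat \<Rightarrow> int) \<Rightarrow> bool" where
  "is_aut M g \<longleftrightarrow> bij_betw (act (rk M) g) (lat (rk M)) (lat (rk M)) \<and>
     (\<forall>x \<in> lat (rk M). \<forall>y \<in> lat (rk M). bil M (act (rk M) g x) (act (rk M) g y) = bil M x y)"

text \<open>Z/3-reversing: acts as -id on discr_3 L, i.e. g x + x \<in> L for x representing
  a class of 3-power order in L^*/L.\<close>

definition z3_reversing :: "int list list \<Rightarrow> (nat \<Rightarrow> nat \<Rightarrow> int) \<Rightarrow> bool" where
  "z3_reversing M g \<longleftrightarrow>
     (\<forall>x \<in> discr3_reps M. (\<lambda>i. act (rk M) g x i + x i) \<in> lat (rk M))"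

definition two_root :: "int list list \<Rightarrow> (nat \<Rightarrow> real) \<Rightarrow> bool" where
  "two_root M v \<longleftrightarrow> v \<in> lat (rk M) \<and> bil M v v = 2"

definition six_root :: "int list list \<Rightarrow> (nat \<Rightarrow> real) \<Rightarrow> bool" where
  "six_root M v \<longleftrightarrow> v \<in> lat (rk M) \<and> bil M v v = 6 \<and>
     (\<forall>x \<in> lat (rk M). bil M v x / 3 \<in> \<int>)"

definition lroot :: "int list list \<Rightarrow> (nat \<Rightarrow> real) \<Rightarrow> bool" where
  "lroot M v \<longleftrightarrow> two_root M v \<or> six_root M v"

text \<open>The form has signature (n-1,1); the hyperbolic space is the projectivisation of the
  cone of negative vectors, its double cover is the cone modulo positive scalars. We work with
  the cone itself (the preimage of the double cover). Mirrors of W are the hyperplanes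
  orthogonal to 2- and 6-roots; the lifts P^# of the cells (fundamental chambers of W)
  correspond to the connected components of the cone with all mirrors removed.\<close>

definition neg_cone :: "int list list \<Rightarrow> (nat \<Rightarrow> real) set" where
  "neg_cone M = {x \<in> Vsp (rk M). bil M x x < 0}"

definition cone_minus_mirrors :: "int list list \<Rightarrow> (nat \<Rightarrow> real) set" where
  "cone_minus_mirrors M = {x \<in> neg_cone M. \<forall>v. lroot M v \<longrightarrow> bil M v x \<noteq> 0}"

definition cell_lift :: "int list list \<Rightarrow> (nat \<Rightarrow> real) set \<Rightarrow> bool" where
  "cell_lift M K \<longleftrightarrow>
     (\<exists>x \<in> cone_minus_mirrors M. K = connected_component_set (cone_minus_mirrors M) x)"

definition P_direct :: "int list list \<Rightarrow> (nat \<Rightarrow> nat \<Rightarrow> int) \<Rightarrow> (nat \<Rightarrow> real) set \<Rightarrow> bool" where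
  "P_direct M g K \<longleftrightarrow> act (rk M) g ` K = K"

definition achiral :: "int list list \<Rightarrow> bool" where
  "achiral M \<longleftrightarrow> (\<exists>g. is_aut M g \<and> z3_reversing M g \<and> (\<exists>K. cell_lift M K \<and> P_direct M g K))"

definition osum :: "int list list \<Rightarrow> int list list \<Rightarrow> int list list" (infixr "\<oplus>\<^sub>L" 65) where
  "osum A B = map (\<lambda>r. r @ replicate (length B) 0) A @ map (\<lambda>r. replicate (length A) 0 @ r) B"

definition scaleL :: "int \<Rightarrow> int list list \<Rightarrow> int list list" where
  "scaleL c A = map (map (\<lambda>a. c * a)) A"

definition cartan :: "nat \<Rightarrow> (nat \<times> nat) list \<Rightarrow> int list list" where
  "cartan n E = map (\<lambda>i. map (\<lambda>j. if i = j then 2 else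
       if (i, j) \<in> set E \<or> (j, i) \<in> set E then -1 else 0) [0..<n]) [0..<n]"

definition U_lat :: "int list list" where "U_lat = [[0, 1], [1, 0]]"
definition A2_lat :: "int list list" where "A2_lat = cartan 2 [(0,1)]"
definition D4_lat :: "int list list" where "D4_lat = cartan 4 [(0,1),(1,2),(1,3)]"
definition E6_lat :: "int list list" where
  "E6_lat = cartan 6 [(0,2),(2,3),(3,4),(4,5),(1,3)]"
definition E8_lat :: "int list list" where
  "E8_lat = cartan 8 [(0,2),(2,3),(3,4),(4,5),(5,6),(6,7),(1,3)]"

end

(*
  For each lattice we exhibit an automorphism g with g^2 = 1 that acts as -1 on discr_3 and
  whose fixed space meets the negative cone without being orthogonal to any root: every lattice
  vector orthogonal to the fixed space has norm divisible by 4, while roots have norm 2 or 6.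
  A generic fixed vector of negative norm then lies on no mirror. Indeed, there are only
  countably many roots, and along the polynomial curve t |-> f_0 + t f_1 + ... + t^m f_m through
  fixed vectors f_k each mirror is met in finitely many points. Since g permutes the mirrors
  and fixes this vector, it maps the cell containing it onto itself. The finite linear algebra
  about g is verified by evaluation from explicit integer certificates.
*)

theory Submission
  imports Defs
begin

section \<open>Linear algebra of the Gram form\<close>

definition int_vec :: "nat \<Rightarrow> (nat \<Rightarrow> int) \<Rightarrow> nat \<Rightarrow> real" where
  "int_vec n h = (\<lambda>i. if i < n then of_int (h i) else 0)"

lemma bil_sum_left:
  assumes "finite K"
  shows "bil M (\<lambda>i. \<Sum>k\<in>K. c k * f k i) y = (\<Sum>k\<in>K. c k * bil M (f k) y)"
proof -
  have "bil M (\<lambda>i. \<Sum>k\<in>K. c k * f k i) y =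
     (\<Sum>i<rk M. \<Sum>j<rk M. \<Sum>k\<in>K. c k * (of_int (gram M i j) * f k i * y j))"
    unfolding bil_def by (simp add: sum_distrib_left sum_distrib_right mult_ac)
  also have "\<dots> = (\<Sum>k\<in>K. c k * bil M (f k) y)"
    unfolding bil_def by (simp add: sum.swap[where A = K] sum_distrib_left)
  finally show ?thesis .
qed

lemma bil_sum_right:
  assumes "finite K"
  shows "bil M x (\<lambda>i. \<Sum>k\<in>K. c k * f k i) = (\<Sum>k\<in>K. c k * bil M x (f k))"
proof -
  have "bil M x (\<lambda>i. \<Sum>k\<in>K. c k * f k i) =
     (\<Sum>i<rk M. \<Sum>j<rk M. \<Sum>k\<in>K. c k * (of_int (gram M i j) * x i * f k j))"
    unfolding bil_def by (simp add: sum_distrib_left mult_ac)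
  also have "\<dots> = (\<Sum>k\<in>K. c k * bil M x (f k))"
    unfolding bil_def by (simp add: sum.swap[where A = K] sum_distrib_left)
  finally show ?thesis .
qed

lemma act_sum:
  assumes "finite K"
  shows "act n g (\<lambda>i. \<Sum>k\<in>K. c k * f k i) = (\<lambda>i. \<Sum>k\<in>K. c k * act n g (f k) i)"
proof
  fix i
  have "(\<Sum>j<n. of_int (g i j) * (\<Sum>k\<in>K. c k * f k j))
      = (\<Sum>k\<in>K. c k * (\<Sum>j<n. of_int (g i j) * f k j))"
    by (simp add: sum_distrib_left sum.swap[where A = K] mult_ac)
  then show "act n g (\<lambda>i. \<Sum>k\<in>K. c k * f k i) i = (\<Sum>k\<in>K. c k * act n g (f k) i)"
    by (simp add: act_def)
qed

lemma lat_subset_Vsp: "lat n \<subseteq> Vsp n"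
  by (auto simp: lat_def)

lemma act_in_Vsp: "act n g x \<in> Vsp n"
  by (simp add: act_def Vsp_def)

lemma act_in_lat: "x \<in> lat n \<Longrightarrow> act n g x \<in> lat n"
  by (auto simp: lat_def act_def Vsp_def)

lemma continuous_on_act: "continuous_on S (act n g)"
proof (rule continuous_on_coordinatewise_then_product)
  fix i
  show "continuous_on S (\<lambda>x. act n g x i)"
    by (cases "i < n") (auto simp: act_def intro!: continuous_on_sum continuous_on_mult_left
        continuous_on_subset[OF continuous_on_product_coordinates])
qed

lemma int_vec_in_lat: "int_vec n h \<in> lat n"
  by (auto simp: int_vec_def lat_def Vsp_def)

lemma countable_lat: "countable (lat n)"
proof -
  have "lat n \<subseteq> range (\<lambda>xs :: int list. int_vec n (nth xs))"
  proof
    fix x assume x: "x \<in> lat n"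
    have "x = int_vec n (nth (map (\<lambda>i. \<lfloor>x i\<rfloor>) [0..<n]))"
      using x by (auto simp: int_vec_def lat_def Vsp_def elim!: Ints_cases)
    then show "x \<in> range (\<lambda>xs :: int list. int_vec n (nth xs))"
      by blast
  qed
  then show ?thesis
    by (rule countable_subset) simp
qed

lemma bil_int_vec_right:
  "bil M x (int_vec (rk M) h) = (\<Sum>a<rk M. x a * of_int (\<Sum>b<rk M. gram M a b * h b))"
  unfolding bil_def int_vec_def by (simp add: sum_distrib_left mult_ac)

lemma bil_int_vec_int_vec:
  "bil M (int_vec (rk M) h) (int_vec (rk M) h')
    = of_int (\<Sum>a<rk M. h a * (\<Sum>b<rk M. gram M a b * h' b))"
  unfolding bil_int_vec_right by (simp add: int_vec_def)

lemma act_eq_sum_columns: "act n g x = (\<lambda>i. \<Sum>k<n. x k * int_vec n (\<lambda>i. g i k) i)"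
  by (auto simp: act_def int_vec_def mult_ac)

lemma lroot_norm_div_4_notin_Ints: "lroot M v \<Longrightarrow> bil M v v / 4 \<notin> \<int>"
proof
  assume "lroot M v" "bil M v v / 4 \<in> \<int>"
  then obtain z :: int where "bil M v v / 4 = of_int z" "bil M v v = 2 \<or> bil M v v = 6"
    by (auto simp: lroot_def two_root_def six_root_def elim: Ints_cases)
  then have "4 * z = 2 \<or> 4 * z = (6::int)"
    by linarith
  then show False
    by presburger
qed

section \<open>Achirality from a fixed point off the mirrors\<close>

lemma connected_component_set_image_involution:
  assumes "continuous_on S f" "f ` S \<subseteq> S" "\<And>y. y \<in> S \<Longrightarrow> f (f y) = y" "x \<in> S" "f x = x"
  shows "f ` connected_component_set S x = connected_component_set S x"
proof -
  let ?C = "connected_component_set S x"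
  have "?C \<subseteq> S"
    by (rule connected_component_subset)
  have into: "f ` ?C \<subseteq> ?C"
  proof (rule connected_component_maximal)
    show "x \<in> f ` ?C"
      using assms(4,5) by (intro rev_image_eqI[of x]) simp_all
    show "connected (f ` ?C)"
      by (rule connected_continuous_image[OF continuous_on_subset[OF assms(1) \<open>?C \<subseteq> S\<close>]])
        (rule connected_connected_component)
    show "f ` ?C \<subseteq> S"
      using image_mono[OF \<open>?C \<subseteq> S\<close>, of f] assms(2) by (rule order_trans)
  qed
  moreover have "?C \<subseteq> f ` ?C"
  proof
    fix y assume "y \<in> ?C"
    with into \<open>?C \<subseteq> S\<close> have "f y \<in> ?C" "y = f (f y)"
      using assms(3) by auto
    then show "y \<in> f ` ?C"
      by (rule rev_image_eqI)
  qed
  ultimately show ?thesis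
    by (rule subset_antisym)
qed

lemma countable_polyfuns_nonvanishing_point:
  fixes c :: "'v \<Rightarrow> nat \<Rightarrow> real"
  assumes "countable V" "\<And>v. v \<in> V \<Longrightarrow> \<exists>k\<le>m. c v k \<noteq> 0" "a < b"
  shows "\<exists>t. a < t \<and> t < b \<and> (\<forall>v\<in>V. (\<Sum>k\<le>m. c v k * t ^ k) \<noteq> 0)"
proof -
  define Z where "Z = (\<Union>v\<in>V. {t. (\<Sum>k\<le>m. c v k * t ^ k) = 0})"
  have "finite {t. (\<Sum>k\<le>m. c v k * t ^ k) = 0}" if "v \<in> V" for v
    using assms(2)[OF that] polyfun_roots_finite by blast
  then have "countable Z"
    unfolding Z_def using assms(1) by (intro countable_UN) (auto intro: countable_finite)
  moreover have "uncountable {a<..<b}"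
    using assms(3) by (simp add: uncountable_open_interval)
  ultimately obtain t where "t \<in> {a<..<b}" "t \<notin> Z"
    by (metis countable_subset subsetI)
  then show ?thesis
    unfolding Z_def by auto
qed

definition poly_curve :: "(nat \<Rightarrow> nat \<Rightarrow> real) \<Rightarrow> nat \<Rightarrow> real \<Rightarrow> nat \<Rightarrow> real" where
  "poly_curve fs m t = (\<lambda>i. \<Sum>k\<le>m. t ^ k * fs k i)"

lemma poly_curve_in_cone_minus_mirrors:
  assumes in_Vsp: "\<And>k. k \<le> m \<Longrightarrow> fs k \<in> Vsp (rk M)"
    and no_root_orthogonal: "\<And>v. lroot M v \<Longrightarrow> \<exists>k\<le>m. bil M v (fs k) \<noteq> 0"
    and negative: "bil M (fs 0) (fs 0) < 0"
  shows "\<exists>t. poly_curve fs m t \<in> cone_minus_mirrors M"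
proof -
  let ?q = "\<lambda>t. bil M (poly_curve fs m t) (poly_curve fs m t)"
  have "isCont ?q 0"
    unfolding bil_def poly_curve_def by (intro continuous_intros)
  moreover have "poly_curve fs m 0 = fs 0"
    by (auto simp: poly_curve_def zero_power sum.atMost_shift)
  ultimately have "(?q \<longlongrightarrow> bil M (fs 0) (fs 0)) (at 0)"
    by (simp add: isCont_def)
  then have "\<forall>\<^sub>F t in at 0. ?q t < 0"
    using negative by (rule order_tendstoD)
  then obtain \<epsilon> :: real where "\<epsilon> > 0"
    and \<epsilon>: "\<And>t. t \<noteq> 0 \<Longrightarrow> \<bar>t\<bar> < \<epsilon> \<Longrightarrow> ?q t < 0"
    by (auto simp: eventually_at dist_real_def)
  have "countable {v. lroot M v}"
    by (rule countable_subset[OF _ countable_lat[of "rk M"]])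
      (auto simp: lroot_def two_root_def six_root_def)
  then have "\<exists>t. 0 < t \<and> t < \<epsilon>
      \<and> (\<forall>v\<in>{v. lroot M v}. (\<Sum>k\<le>m. bil M v (fs k) * t ^ k) \<noteq> 0)"
    by (rule countable_polyfuns_nonvanishing_point) (use no_root_orthogonal \<open>\<epsilon> > 0\<close> in auto)
  then obtain t where t: "0 < t" "t < \<epsilon>"
    and off_mirrors: "\<forall>v\<in>{v. lroot M v}. (\<Sum>k\<le>m. bil M v (fs k) * t ^ k) \<noteq> 0"
    by blast
  have "bil M v (poly_curve fs m t) = (\<Sum>k\<le>m. bil M v (fs k) * t ^ k)" for v
    unfolding poly_curve_def by (simp add: bil_sum_right mult.commute)
  moreover have "poly_curve fs m t \<in> Vsp (rk M)"
    using in_Vsp by (auto simp: poly_curve_def Vsp_def)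
  ultimately have "poly_curve fs m t \<in> cone_minus_mirrors M"
    using \<epsilon>[of t] t off_mirrors by (auto simp: cone_minus_mirrors_def neg_cone_def)
  then show ?thesis ..
qed

locale isometric_involution =
  fixes M :: "int list list" and g :: "nat \<Rightarrow> nat \<Rightarrow> int"
  assumes isometric: "\<And>x y. bil M (act (rk M) g x) (act (rk M) g y) = bil M x y"
    and involutive: "\<And>x. x \<in> Vsp (rk M) \<Longrightarrow> act (rk M) g (act (rk M) g x) = x"
begin

lemma is_aut: "is_aut M g"
  unfolding is_aut_def
proof
  show "bij_betw (act (rk M) g) (lat (rk M)) (lat (rk M))"
    by (rule bij_betw_byWitness[where f' = "act (rk M) g"])
      (auto simp: act_in_lat involutive lat_subset_Vsp[THEN subsetD])
  show "\<forall>x\<in>lat (rk M). \<forall>y\<in>lat (rk M). bil M (act (rk M) g x) (act (rk M) g y) = bil M x y"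
    by (simp add: isometric)
qed

lemma bil_act_left: "y \<in> Vsp (rk M) \<Longrightarrow> bil M (act (rk M) g x) y = bil M x (act (rk M) g y)"
  using isometric[of x "act (rk M) g y"] by (simp add: involutive)

lemma lroot_act:
  assumes "lroot M v"
  shows "lroot M (act (rk M) g v)"
proof -
  have "v \<in> lat (rk M)"
    using assms by (auto simp: lroot_def two_root_def six_root_def)
  then have in_lat: "act (rk M) g v \<in> lat (rk M)"
    by (rule act_in_lat)
  have "bil M (act (rk M) g v) x / 3 \<in> \<int>" if "six_root M v" "x \<in> lat (rk M)" for x
  proof -
    have "bil M (act (rk M) g v) x = bil M v (act (rk M) g x)"
      using that(2) lat_subset_Vsp by (blast intro: bil_act_left)
    with that act_in_lat show ?thesis
      by (simp add: six_root_def)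
  qed
  with assms in_lat show ?thesis
    by (auto simp: lroot_def two_root_def six_root_def isometric)
qed

lemma act_cone_minus_mirrors:
  assumes "x \<in> cone_minus_mirrors M"
  shows "act (rk M) g x \<in> cone_minus_mirrors M"
proof -
  have x: "x \<in> Vsp (rk M)" "bil M x x < 0" "\<And>v. lroot M v \<Longrightarrow> bil M v x \<noteq> 0"
    using assms by (auto simp: cone_minus_mirrors_def neg_cone_def)
  have "bil M v (act (rk M) g x) \<noteq> 0" if "lroot M v" for v
    using bil_act_left[OF x(1), of v] x(3)[OF lroot_act[OF that]] by simp
  with x show ?thesis
    by (simp add: cone_minus_mirrors_def neg_cone_def act_in_Vsp isometric)
qed

lemma achiral_if_fixes_point:
  assumes "z3_reversing M g" "x \<in> cone_minus_mirrors M" "act (rk M) g x = x"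
  shows "achiral M"
proof -
  let ?K = "connected_component_set (cone_minus_mirrors M) x"
  have "act (rk M) g ` ?K = ?K"
  proof (rule connected_component_set_image_involution)
    show "act (rk M) g ` cone_minus_mirrors M \<subseteq> cone_minus_mirrors M"
      using act_cone_minus_mirrors by blast
    show "act (rk M) g (act (rk M) g y) = y" if "y \<in> cone_minus_mirrors M" for y
      using that by (simp add: involutive cone_minus_mirrors_def neg_cone_def)
  qed (use assms(2,3) continuous_on_act in auto)
  then have "cell_lift M ?K \<and> P_direct M g ?K"
    using assms(2) by (auto simp: cell_lift_def P_direct_def)
  with is_aut assms(1) show ?thesis
    by (auto simp: achiral_def)
qed

lemma achiral_if_fixed_vectors:
  fixes fs :: "nat \<Rightarrow> nat \<Rightarrow> real"
  assumes "z3_reversing M g"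
    and "\<And>k. k \<le> m \<Longrightarrow> fs k \<in> Vsp (rk M)"
    and fixed: "\<And>k. k \<le> m \<Longrightarrow> act (rk M) g (fs k) = fs k"
    and "\<And>v. lroot M v \<Longrightarrow> \<exists>k\<le>m. bil M v (fs k) \<noteq> 0"
    and "bil M (fs 0) (fs 0) < 0"
  shows "achiral M"
proof -
  obtain t where "poly_curve fs m t \<in> cone_minus_mirrors M"
    using poly_curve_in_cone_minus_mirrors assms(2,4,5) by blast
  moreover have "act (rk M) g (poly_curve fs m t) = poly_curve fs m t"
    unfolding poly_curve_def by (simp add: act_sum fixed)
  ultimately show ?thesis
    by (rule achiral_if_fixes_point[OF assms(1)])
qed

end

section \<open>Integer certificates\<close>

lemma bil_act_act_if_gram_invariant:
  fixes g A :: "nat \<Rightarrow> nat \<Rightarrow> int"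
  assumes GA: "\<forall>i<rk M. \<forall>l<rk M. (\<Sum>j<rk M. gram M i j * g j l) = A i l"
    and gA: "\<forall>k<rk M. \<forall>l<rk M. (\<Sum>i<rk M. g i k * A i l) = gram M k l"
  shows "bil M (act (rk M) g x) (act (rk M) g y) = bil M x y"
proof -
  let ?col = "\<lambda>k. int_vec (rk M) (\<lambda>i. g i k)"
  have col: "bil M (?col k) (?col l) = of_int (gram M k l)" if "k < rk M" "l < rk M" for k l
  proof -
    have "(\<Sum>a<rk M. g a k * (\<Sum>b<rk M. gram M a b * g b l)) = (\<Sum>a<rk M. g a k * A a l)"
      using GA that by (intro sum.cong) auto
    with gA that show ?thesis
      by (simp add: bil_int_vec_int_vec)
  qed
  have "bil M (act (rk M) g x) (act (rk M) g y)
      = (\<Sum>k<rk M. x k * (\<Sum>l<rk M. y l * bil M (?col k) (?col l)))"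
    unfolding act_eq_sum_columns by (simp add: bil_sum_left bil_sum_right)
  also have "\<dots> = (\<Sum>k<rk M. x k * (\<Sum>l<rk M. y l * of_int (gram M k l)))"
    by (simp add: col)
  also have "\<dots> = bil M x y"
    unfolding bil_def by (simp add: sum_distrib_left mult_ac)
  finally show ?thesis .
qed

lemma act_act_if_square_eq_id:
  assumes "\<forall>i<n. \<forall>k<n. (\<Sum>j<n. g i j * g j k) = (if i = k then 1 else 0)" "x \<in> Vsp n"
  shows "act n g (act n g x) = x"
proof
  fix i
  show "act n g (act n g x) i = x i"
  proof (cases "i < n")
    case True
    have "act n g (act n g x) i = (\<Sum>j<n. \<Sum>k<n. of_int (g i j * g j k) * x k)"
      using True by (simp add: act_def sum_distrib_left mult_ac)
    also have "\<dots> = (\<Sum>k<n. of_int (\<Sum>j<n. g i j * g j k) * x k)"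
      by (subst sum.swap) (simp add: sum_distrib_right)
    also have "\<dots> = (\<Sum>k<n. if i = k then x k else 0)"
      using assms(1) True by (intro sum.cong) auto
    finally show ?thesis
      using True by simp
  qed (use assms(2) in \<open>simp add: act_def Vsp_def\<close>)
qed

lemma act_int_vec_if_fixed:
  assumes "\<forall>i<n. (\<Sum>j<n. g i j * h j) = h i"
  shows "act n g (int_vec n h) = int_vec n h"
  using assms by (auto simp: act_def int_vec_def simp flip: of_int_mult of_int_sum)

lemma Ints_three_mult_if:
  fixes y :: real
  assumes "6 * y \<in> \<int>" "3 ^ k * y \<in> \<int>"
  shows "3 * y \<in> \<int>"
proof (cases k)
  case (Suc j)
  have "odd ((3::int) ^ j)"
    by simp
  then obtain q :: int where "3 ^ j = 2 * q + 1"
    by (rule oddE)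
  then have "(3::real) ^ j = 2 * of_int q + 1"
    by (metis of_int_numeral of_int_power of_int_mult of_int_add of_int_1)
  then have "3 * y = 3 ^ k * y - of_int q * (6 * y)"
    using Suc by (simp add: algebra_simps)
  with assms show ?thesis
    by simp
qed (use assms in simp)

lemma three_mult_in_Ints_if_discr3:
  fixes C :: "nat \<Rightarrow> nat \<Rightarrow> int"
  assumes C: "\<forall>i<rk M. \<forall>a<rk M. (\<Sum>b<rk M. gram M a b * C i b) = (if i = a then 6 else 0)"
    and x: "x \<in> discr3_reps M" and i: "i < rk M"
  shows "3 * x i \<in> \<int>"
proof -
  have "bil M x (int_vec (rk M) (C i)) = (\<Sum>a<rk M. x a * (if i = a then 6 else 0))"
    unfolding bil_int_vec_right using C i by (intro sum.cong) auto
  also have "\<dots> = 6 * x i"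
    using i by (simp add: if_distrib cong: if_cong)
  finally have "bil M x (int_vec (rk M) (C i)) = 6 * x i" .
  moreover have "bil M x (int_vec (rk M) (C i)) \<in> \<int>"
    using x by (simp add: discr3_reps_def dual_lat_def int_vec_in_lat)
  ultimately have "6 * x i \<in> \<int>"
    by simp
  moreover obtain k :: nat where "3 ^ k * x i \<in> \<int>"
    using x i by (auto simp: discr3_reps_def lat_def)
  ultimately show ?thesis
    by (rule Ints_three_mult_if)
qed

lemma z3_reversing_if_certificate:
  fixes lam mu C :: "nat \<Rightarrow> nat \<Rightarrow> int"
  assumes L: "\<forall>i<rk M. \<forall>a<rk M.
      g i a + (if i = a then 1 else 0) = (\<Sum>b<rk M. gram M a b * lam i b) + 3 * mu i a"
    and C: "\<forall>i<rk M. \<forall>a<rk M. (\<Sum>b<rk M. gram M a b * C i b) = (if i = a then 6 else 0)"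
  shows "z3_reversing M g"
  unfolding z3_reversing_def
proof
  fix x assume x: "x \<in> discr3_reps M"
  then have dual: "\<And>v. v \<in> lat (rk M) \<Longrightarrow> bil M x v \<in> \<int>"
    by (auto simp: discr3_reps_def dual_lat_def)
  have "act (rk M) g x i + x i \<in> \<int>" if i: "i < rk M" for i
  proof -
    have "act (rk M) g x i + x i
        = (\<Sum>a<rk M. of_int (g i a) * x a) + (\<Sum>a<rk M. if i = a then x a else 0)"
      using i by (simp add: act_def)
    also have "\<dots> = (\<Sum>a<rk M. of_int (g i a + (if i = a then 1 else 0)) * x a)"
      by (subst sum.distrib[symmetric], rule sum.cong) (auto simp: algebra_simps)
    also have "\<dots> = (\<Sum>a<rk M. x a * of_int (\<Sum>b<rk M. gram M a b * lam i b))
        + (\<Sum>a<rk M. of_int (mu i a) * (3 * x a))"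
      using L i by (simp add: sum.distrib[symmetric] algebra_simps)
    also have "\<dots> = bil M x (int_vec (rk M) (lam i)) + (\<Sum>a<rk M. of_int (mu i a) * (3 * x a))"
      by (simp add: bil_int_vec_right)
    finally have "act (rk M) g x i + x i
        = bil M x (int_vec (rk M) (lam i)) + (\<Sum>a<rk M. of_int (mu i a) * (3 * x a))" .
    moreover have "(\<Sum>a<rk M. of_int (mu i a) * (3 * x a)) \<in> \<int>"
      using three_mult_in_Ints_if_discr3[OF C x] by (intro Ints_sum Ints_mult[OF Ints_of_int]) auto
    ultimately show ?thesis
      using dual[OF int_vec_in_lat] by simp
  qed
  moreover have "x \<in> Vsp (rk M)"
    using x by (simp add: discr3_reps_def dual_lat_def)
  ultimately show "(\<lambda>i. act (rk M) g x i + x i) \<in> lat (rk M)"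
    by (simp add: lat_def Vsp_def act_def)
qed

lemma four_dvd_quadratic_form:
  fixes p :: "nat \<Rightarrow> int" and B :: "nat \<Rightarrow> nat \<Rightarrow> int"
  assumes "\<forall>s<r. 4 dvd B s s" "\<forall>s<r. \<forall>t<r. 2 dvd B s t" "\<forall>s<r. \<forall>t<r. B s t = B t s"
  shows "4 dvd (\<Sum>s<r. \<Sum>t<r. p s * p t * B s t)"
  using assms
proof (induction r)
  case (Suc r)
  have "(\<Sum>t<r. p r * p t * B r t) = (\<Sum>s<r. p s * p r * B s r)"
    using Suc.prems(3) by (intro sum.cong) (auto simp: mult_ac)
  then have split: "(\<Sum>s<Suc r. \<Sum>t<Suc r. p s * p t * B s t)
      = (\<Sum>s<r. \<Sum>t<r. p s * p t * B s t) + 2 * (\<Sum>s<r. p s * p r * B s r) + p r * p r * B r r"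
    by (simp add: sum.distrib)
  have "4 dvd (\<Sum>s<r. \<Sum>t<r. p s * p t * B s t)"
    using Suc by auto
  moreover have "2 dvd (\<Sum>s<r. p s * p r * B s r)"
    using Suc.prems(2) by (intro dvd_sum) auto
  then have "4 dvd 2 * (\<Sum>s<r. p s * p r * B s r)"
    by auto
  moreover have "4 dvd p r * p r * B r r"
    using Suc.prems(1) by simp
  ultimately show ?case
    unfolding split by (intro dvd_add)
qed simp

lemma lat_orthogonal_in_int_span:
  fixes F Fm N phi R :: "nat \<Rightarrow> nat \<Rightarrow> int" and D :: int
  assumes Fm: "\<forall>k\<le>m. \<forall>a<rk M. (\<Sum>b<rk M. gram M a b * F k b) = Fm k a"
    and cert: "\<forall>i<rk M. \<forall>j<rk M.
      D * (if i = j then 1 else 0) = D * (\<Sum>s<r. N s i * phi s j) + (\<Sum>k\<le>m. R i k * Fm k j)"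
    and "D \<noteq> 0"
    and v: "v \<in> lat (rk M)" and orth: "\<forall>k\<le>m. bil M v (int_vec (rk M) (F k)) = 0"
  shows "\<exists>p. v = (\<lambda>i. \<Sum>s<r. of_int (p s) * int_vec (rk M) (N s) i)"
proof -
  let ?n = "rk M"
  define p where "p s = \<lfloor>\<Sum>j<?n. of_int (phi s j) * v j\<rfloor>" for s
  have p: "of_int (p s) = (\<Sum>j<?n. of_int (phi s j) * v j)" for s
  proof -
    have "(\<Sum>j<?n. of_int (phi s j) * v j) \<in> \<int>"
      using v by (auto simp: lat_def)
    then show ?thesis
      by (simp add: p_def)
  qed
  have orth': "(\<Sum>j<?n. of_int (Fm k j) * v j) = 0" if "k \<le> m" for k
  proof -
    have "bil M v (int_vec ?n (F k)) = (\<Sum>j<?n. v j * of_int (Fm k j))"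
      unfolding bil_int_vec_right using Fm that by (intro sum.cong) auto
    with orth that show ?thesis
      by (simp add: mult.commute)
  qed
  have "v i = (\<Sum>s<r. of_int (p s) * int_vec ?n (N s) i)" for i
  proof (cases "i < ?n")
    case True
    have "of_int D * v i = (\<Sum>j<?n. if i = j then of_int D * v j else 0)"
      using True by simp
    also have "\<dots> = (\<Sum>j<?n. of_int (D * (if i = j then 1 else 0)) * v j)"
      by (intro sum.cong) auto
    also have "\<dots> = (\<Sum>j<?n. of_int (D * (\<Sum>s<r. N s i * phi s j) + (\<Sum>k\<le>m. R i k * Fm k j)) * v j)"
      using cert True by (intro sum.cong) auto
    also have "\<dots> = of_int D * (\<Sum>j<?n. \<Sum>s<r. of_int (N s i) * (of_int (phi s j) * v j))
        + (\<Sum>k\<le>m. of_int (R i k) * (\<Sum>j<?n. of_int (Fm k j) * v j))"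
      by (simp add: sum.distrib distrib_left distrib_right sum_distrib_left sum_distrib_right mult_ac
          sum.swap[where A = "{..m}"])
    also have "\<dots> = of_int D * (\<Sum>s<r. of_int (N s i) * of_int (p s))"
      using orth' by (simp add: p sum_distrib_left sum.swap[where A = "{..<?n}"])
    finally show ?thesis
      using \<open>D \<noteq> 0\<close> True by (simp add: int_vec_def mult.commute)
  qed (use v in \<open>simp add: lat_def Vsp_def int_vec_def\<close>)
  then show ?thesis
    by blast
qed

lemma bil_int_span_div_4:
  fixes N NG :: "nat \<Rightarrow> nat \<Rightarrow> int" and p :: "nat \<Rightarrow> int"
  assumes NG: "\<forall>s<r. \<forall>t<r. (\<Sum>a<rk M. N s a * (\<Sum>b<rk M. gram M a b * N t b)) = NG s t"
    and "\<forall>s<r. 4 dvd NG s s" "\<forall>s<r. \<forall>t<r. 2 dvd NG s t" "\<forall>s<r. \<forall>t<r. NG s t = NG t s"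
  defines "w \<equiv> \<lambda>i. \<Sum>s<r. of_int (p s) * int_vec (rk M) (N s) i"
  shows "bil M w w / 4 \<in> \<int>"
proof -
  have "bil M w w = (\<Sum>s<r. of_int (p s) * (\<Sum>t<r. of_int (p t)
      * bil M (int_vec (rk M) (N s)) (int_vec (rk M) (N t))))"
    unfolding w_def by (simp add: bil_sum_left bil_sum_right)
  also have "\<dots> = of_int (\<Sum>s<r. \<Sum>t<r. p s * p t * NG s t)"
    using NG by (simp add: bil_int_vec_int_vec sum_distrib_left mult_ac)
  finally have "bil M w w = of_int (\<Sum>s<r. \<Sum>t<r. p s * p t * NG s t)" .
  moreover obtain z where "(\<Sum>s<r. \<Sum>t<r. p s * p t * NG s t) = 4 * z"
    using four_dvd_quadratic_form[OF assms(2-4), of p] by (elim dvdE)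
  ultimately show ?thesis
    by simp
qed

text \<open>Read as integer matrices, with G the Gram matrix: A = G g certifies g^T G g = G;
  g + 1 = lam G + 3 mu together with G C = 6 shows that g + 1 maps every x \<in> L^* with
  3 x \<in> L into L; the rows of F are fixed by g, Fm = F G, and F_0 has negative norm;
  D (1 - N^T phi) = R Fm shows that the lattice vectors orthogonal to all rows of F are integral
  combinations of the rows of N; and NG = N G N^T has even entries and diagonal divisible by 4.\<close>

lemma achiral_if_certificate:
  fixes g A lam mu C F Fm N phi R NG :: "nat \<Rightarrow> nat \<Rightarrow> int" and D :: int
  assumes GA: "\<forall>i<rk M. \<forall>l<rk M. (\<Sum>j<rk M. gram M i j * g j l) = A i l"
    and gA: "\<forall>k<rk M. \<forall>l<rk M. (\<Sum>i<rk M. g i k * A i l) = gram M k l"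
    and square: "\<forall>i<rk M. \<forall>k<rk M. (\<Sum>j<rk M. g i j * g j k) = (if i = k then 1 else 0)"
    and L: "\<forall>i<rk M. \<forall>a<rk M.
      g i a + (if i = a then 1 else 0) = (\<Sum>b<rk M. gram M a b * lam i b) + 3 * mu i a"
    and C: "\<forall>i<rk M. \<forall>a<rk M. (\<Sum>b<rk M. gram M a b * C i b) = (if i = a then 6 else 0)"
    and fixed: "\<forall>k\<le>m. \<forall>i<rk M. (\<Sum>j<rk M. g i j * F k j) = F k i"
    and Fm: "\<forall>k\<le>m. \<forall>a<rk M. (\<Sum>b<rk M. gram M a b * F k b) = Fm k a"
    and negative: "(\<Sum>a<rk M. F 0 a * Fm 0 a) < 0"
    and span: "\<forall>i<rk M. \<forall>j<rk M.
      D * (if i = j then 1 else 0) = D * (\<Sum>s<r. N s i * phi s j) + (\<Sum>k\<le>m. R i k * Fm k j)"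
    and "D \<noteq> 0"
    and NG: "\<forall>s<r. \<forall>t<r. (\<Sum>a<rk M. N s a * (\<Sum>b<rk M. gram M a b * N t b)) = NG s t"
    and NG_4: "\<forall>s<r. 4 dvd NG s s" "\<forall>s<r. \<forall>t<r. 2 dvd NG s t" "\<forall>s<r. \<forall>t<r. NG s t = NG t s"
  shows "achiral M"
proof -
  interpret isometric_involution M g
    by unfold_locales
      (auto intro: bil_act_act_if_gram_invariant[OF GA gA] act_act_if_square_eq_id[OF square])
  show ?thesis
  proof (rule achiral_if_fixed_vectors[where fs = "\<lambda>k. int_vec (rk M) (F k)"])
    show "z3_reversing M g"
      by (rule z3_reversing_if_certificate[OF L C])
    show "int_vec (rk M) (F k) \<in> Vsp (rk M)" for k
      using int_vec_in_lat lat_subset_Vsp by blast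
    show "act (rk M) g (int_vec (rk M) (F k)) = int_vec (rk M) (F k)" if "k \<le> m" for k
      using fixed that by (intro act_int_vec_if_fixed) simp
    show "\<exists>k\<le>m. bil M v (int_vec (rk M) (F k)) \<noteq> 0" if "lroot M v" for v
    proof (rule ccontr)
      assume "\<not> (\<exists>k\<le>m. bil M v (int_vec (rk M) (F k)) \<noteq> 0)"
      moreover have "v \<in> lat (rk M)"
        using that by (auto simp: lroot_def two_root_def six_root_def)
      ultimately obtain p where "v = (\<lambda>i. \<Sum>s<r. of_int (p s) * int_vec (rk M) (N s) i)"
        using lat_orthogonal_in_int_span[OF Fm span \<open>D \<noteq> 0\<close>] by blast
      then have "bil M v v / 4 \<in> \<int>"
        using bil_int_span_div_4[OF NG NG_4] by blast
      with that show False
        using lroot_norm_div_4_notin_Ints by blast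
    qed
    have "(\<Sum>a<rk M. F 0 a * (\<Sum>b<rk M. gram M a b * F 0 b)) = (\<Sum>a<rk M. F 0 a * Fm 0 a)"
      using Fm by (intro sum.cong) auto
    then have "bil M (int_vec (rk M) (F 0)) (int_vec (rk M) (F 0))
        = of_int (\<Sum>a<rk M. F 0 a * Fm 0 a)"
      by (simp only: bil_int_vec_int_vec)
    with negative show "bil M (int_vec (rk M) (F 0)) (int_vec (rk M) (F 0)) < 0"
      by (simp only: of_int_less_0_iff)
  qed
qed

section \<open>The three lattices\<close>

lemma all_lessThan_list_all: "(\<forall>i<n. P i) \<longleftrightarrow> list_all P [0..<n]"
  by (auto simp: list_all_iff)

lemma all_atMost_list_all: "(\<forall>i\<le>m. P i) \<longleftrightarrow> list_all P [0..<Suc m]"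
  by (auto simp: list_all_iff less_Suc_eq_le)

lemma sum_lessThan_sum_list: "(\<Sum>i<n. f i) = sum_list (map f [0..<n])"
  by (simp add: sum_list_distinct_conv_sum_set atLeast0LessThan)

lemma sum_atMost_sum_list: "(\<Sum>i\<le>m. f i) = sum_list (map f [0..<Suc m])"
  by (subst lessThan_Suc_atMost[symmetric]) (rule sum_lessThan_sum_list)

lemmas certificate_code =
  all_lessThan_list_all all_atMost_list_all sum_lessThan_sum_list sum_atMost_sum_list

definition g_E8 :: "int list list" where
  "g_E8 =
   [[256, -228, 32, -142, 70, 272, -196, -386, -2, -2, -2, -3, -1, 2, 25, 44],
    [-286, 256, -36, 159, -78, -305, 220, 432, 3, 2, 2, 3, 2, -3, -28, -49],
    [29, -26, 4, -16, 8, 31, -22, -44, 0, 0, -1, 0, 0, 0, 3, 5],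
    [94, -84, 12, -52, 26, 100, -72, -142, -1, -1, -1, -1, 0, 1, 9, 16],
    [-57, 51, -7, 32, -15, -61, 44, 86, 0, 0, 1, 1, 0, -1, -5, -10],
    [-36, 32, -4, 20, -10, -38, 28, 54, 0, -1, 1, 1, 0, -1, -3, -6],
    [92, -82, 12, -51, 25, 98, -70, -139, -1, -1, 0, -1, -1, 1, 9, 16],
    [198, -177, 25, -110, 54, 211, -152, -299, -2, -2, -1, -2, -1, 1, 20, 34],
    [-146, 130, -18, 81, -40, -155, 112, 220, 2, 2, 2, 0, 2, -2, -14, -26],
    [-222, 197, -27, 123, -60, -236, 170, 334, 3, 3, 3, 0, 3, -3, -22, -38],
    [-295, 262, -37, 164, -80, -313, 226, 444, 4, 4, 4, 0, 4, -4, -29, -51],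
    [-446, 396, -55, 248, -121, -473, 341, 671, 6, 6, 6, 0, 6, -6, -44, -77],
    [-378, 336, -47, 211, -103, -401, 289, 569, 5, 5, 5, 0, 5, -5, -37, -65],
    [-312, 277, -39, 174, -85, -331, 239, 469, 4, 4, 4, 0, 4, -4, -30, -54],
    [-243, 216, -30, 135, -66, -258, 186, 366, 3, 3, 3, 0, 3, -3, -23, -42],
    [-146, 130, -18, 81, -40, -155, 112, 220, 1, 2, 2, 0, 2, -2, -14, -25]]"

definition A_E8 :: "int list list" where
  "A_E8 =
   [[-286, 256, -36, 159, -78, -305, 220, 432, 3, 2, 2, 3, 2, -3, -28, -49],
    [256, -228, 32, -142, 70, 272, -196, -386, -2, -2, -2, -3, -1, 2, 25, 44],
    [-36, 32, -4, 20, -10, -38, 28, 54, 1, 1, -1, 1, 0, -1, -3, -6],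
    [159, -142, 20, -88, 44, 169, -122, -240, -2, -2, -1, -2, 0, 2, 15, 27],
    [-78, 70, -10, 44, -20, -84, 60, 118, 0, 1, 1, 1, 0, -1, -7, -14],
    [-305, 272, -38, 169, -84, -324, 234, 460, 3, 1, 2, 4, 2, -3, -30, -52],
    [220, -196, 28, -122, 60, 234, -168, -332, -2, -1, -1, -3, -2, 3, 21, 38],
    [432, -386, 54, -240, 118, 460, -332, -652, -4, -3, -3, -5, -2, 3, 43, 74],
    [3, -2, 1, -2, 0, 3, -2, -4, 0, 0, 0, 0, 0, 0, 1, -1],
    [2, -2, 1, -2, 1, 1, -1, -3, 0, 0, 0, 0, 0, 0, 0, 1],
    [2, -2, -1, -1, 1, 2, -1, -3, 0, 0, 0, 0, 0, 0, 0, 1],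
    [3, -3, 1, -2, 1, 4, -3, -5, 0, 0, 0, 0, 0, 0, 0, 0],
    [2, -1, 0, 0, 0, 2, -2, -2, 0, 0, 0, 0, 0, 0, 0, 1],
    [-3, 2, -1, 2, -1, -3, 3, 3, 0, 0, 0, 0, 0, 0, 0, -1],
    [-28, 25, -3, 15, -7, -30, 21, 43, 1, 0, 0, 0, 0, 0, -2, -5],
    [-49, 44, -6, 27, -14, -52, 38, 74, -1, 1, 1, 0, 1, -1, -5, -8]]"

definition lam_E8 :: "int list list" where
  "lam_E8 =
   [[0, 2, 1, 0, 0, 2, 2, 0, 1, 2, 1, 0, 0, 1, 0, 1],
    [2, 2, 0, 0, 0, 0, 2, 0, 1, 0, 2, 1, 0, 0, 0, 1],
    [1, 2, 1, 0, 0, 1, 0, 1, 0, 2, 0, 1, 0, 2, 1, 0],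
    [0, 1, 0, 0, 1, 0, 0, 1, 0, 1, 1, 0, 2, 1, 2, 0],
    [0, 0, 1, 0, 2, 0, 1, 1, 1, 1, 2, 2, 0, 1, 0, 1],
    [2, 0, 1, 0, 0, 1, 1, 2, 0, 2, 0, 2, 1, 0, 0, 0],
    [2, 2, 0, 0, 1, 1, 2, 0, 2, 2, 2, 2, 1, 1, 0, 2],
    [0, 0, 2, 0, 1, 2, 0, 2, 2, 0, 0, 2, 0, 2, 0, 2],
    [1, 1, 0, 0, 1, 0, 2, 2, 1, 0, 2, 1, 0, 0, 2, 0],
    [2, 0, 0, 0, 1, 2, 2, 0, 0, 2, 0, 0, 1, 2, 0, 2],
    [1, 2, 1, 0, 2, 0, 2, 0, 2, 0, 0, 2, 1, 2, 1, 2],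
    [0, 1, 1, 0, 2, 2, 2, 2, 1, 0, 2, 0, 0, 0, 0, 2],
    [0, 0, 2, 0, 0, 1, 1, 0, 0, 1, 1, 0, 1, 2, 2, 0],
    [1, 0, 0, 0, 1, 0, 1, 2, 0, 2, 2, 0, 2, 0, 1, 2],
    [0, 0, 0, 0, 0, 0, 0, 0, 2, 0, 1, 0, 2, 1, 0, 0],
    [1, 1, 0, 0, 1, 0, 2, 2, 0, 2, 2, 2, 0, 2, 0, 0]]"

definition mu_E8 :: "int list list" where
  "mu_E8 =
   [[85, -76, 10, -47, 24, 90, -66, -128, -1, -2, -1, 0, 0, 0, 9, 14],
    [-96, 85, -12, 53, -26, -101, 72, 144, 1, 1, 0, 1, 1, -1, -9, -17],
    [9, -9, 1, -5, 3, 10, -7, -15, 0, -1, 0, 0, 1, -1, 1, 2],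
    [31, -28, 4, -17, 8, 34, -24, -48, 0, -1, -1, 1, -1, 1, 2, 6],
    [-19, 17, -3, 11, -6, -19, 14, 28, 0, 0, 0, 0, 1, -1, -1, -4],
    [-12, 10, -2, 7, -3, -12, 9, 17, 0, -1, 1, 0, 0, 0, -1, -2],
    [30, -28, 4, -17, 8, 33, -24, -46, -1, -1, 0, 0, 0, 0, 4, 4],
    [66, -59, 7, -36, 18, 70, -50, -100, -2, 0, 1, -2, 1, -1, 8, 10],
    [-49, 43, -6, 27, -14, -50, 36, 72, 1, 1, 0, 0, 1, 0, -6, -8],
    [-74, 65, -9, 41, -20, -79, 56, 112, 1, 0, 1, 1, 1, -2, -6, -14],
    [-99, 87, -13, 55, -28, -103, 74, 148, 0, 2, 3, -1, 2, -2, -9, -18],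
    [-149, 132, -19, 83, -41, -157, 113, 223, 2, 2, 1, 1, 2, -2, -14, -27],
    [-126, 112, -17, 71, -34, -134, 96, 190, 2, 1, 1, 1, 2, -2, -13, -21],
    [-104, 92, -13, 58, -29, -109, 79, 155, 2, 0, 0, 2, 0, 0, -10, -19],
    [-81, 72, -10, 45, -22, -86, 62, 122, 0, 1, 1, 1, 0, -1, -7, -14],
    [-49, 43, -6, 27, -14, -50, 36, 72, 1, 0, 0, 0, 2, -2, -4, -8]]"

definition C_E8 :: "int list list" where
  "C_E8 =
   [[0, 6, 0, 0, 0, 0, 0, 0, 0, 0, 0, 0, 0, 0, 0, 0],
    [6, 0, 0, 0, 0, 0, 0, 0, 0, 0, 0, 0, 0, 0, 0, 0],
    [0, 0, 4, 2, 0, 0, 0, 0, 0, 0, 0, 0, 0, 0, 0, 0],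
    [0, 0, 2, 4, 0, 0, 0, 0, 0, 0, 0, 0, 0, 0, 0, 0],
    [0, 0, 0, 0, 6, 6, 3, 3, 0, 0, 0, 0, 0, 0, 0, 0],
    [0, 0, 0, 0, 6, 12, 6, 6, 0, 0, 0, 0, 0, 0, 0, 0],
    [0, 0, 0, 0, 3, 6, 6, 3, 0, 0, 0, 0, 0, 0, 0, 0],
    [0, 0, 0, 0, 3, 6, 3, 6, 0, 0, 0, 0, 0, 0, 0, 0],
    [0, 0, 0, 0, 0, 0, 0, 0, 24, 30, 42, 60, 48, 36, 24, 12],
    [0, 0, 0, 0, 0, 0, 0, 0, 30, 48, 60, 90, 72, 54, 36, 18],
    [0, 0, 0, 0, 0, 0, 0, 0, 42, 60, 84, 120, 96, 72, 48, 24],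
    [0, 0, 0, 0, 0, 0, 0, 0, 60, 90, 120, 180, 144, 108, 72, 36],
    [0, 0, 0, 0, 0, 0, 0, 0, 48, 72, 96, 144, 120, 90, 60, 30],
    [0, 0, 0, 0, 0, 0, 0, 0, 36, 54, 72, 108, 90, 72, 48, 24],
    [0, 0, 0, 0, 0, 0, 0, 0, 24, 36, 48, 72, 60, 48, 36, 18],
    [0, 0, 0, 0, 0, 0, 0, 0, 12, 18, 24, 36, 30, 24, 18, 12]]"

definition F_E8 :: "int list list" where
  "F_E8 =
   [[-130, 146, -15, -48, 29, 18, -47, -101, 72, 109, 145, 220, 186, 154, 120, 72],
    [0, 0, 19, 0, 0, 0, 0, 1, 14, 25, 13, 34, 16, 0, 0, 0],
    [0, 1, 11, 0, 0, 0, 0, 0, 8, 14, 7, 19, 9, 0, 0, 0],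
    [0, 0, 6, 1, 0, 0, 0, 0, 3, 6, 2, 8, 4, 0, 0, 0],
    [0, 0, -13, 0, 0, 1, 0, 0, -9, -17, -8, -22, -10, 0, 0, 0],
    [0, 0, -3, 0, 1, 0, 0, 0, -2, -3, -1, -4, -2, 0, 0, 0],
    [1, 0, -12, 0, 0, 0, 0, 0, -8, -15, -7, -20, -9, 0, 0, 0],
    [0, 0, 1, 0, 0, 0, 0, 0, 2, 3, 3, 5, 3, 1, 0, 0],
    [0, 0, -2, 0, 0, 0, 0, 0, -2, -4, -3, -6, -3, 0, 1, 0],
    [0, 0, -2, 0, 0, 0, 0, 0, -2, -2, -1, -3, -1, 0, 0, 1]]"

definition Fm_E8 :: "int list list" where
  "Fm_E8 =
   [[146, -130, 18, -81, 40, 155, -112, -220, -1, -2, -2, 0, -2, 2, 14, 24],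
    [0, 0, 38, -19, 0, -1, 0, 2, 15, 16, -22, 14, -2, -16, 0, 0],
    [1, 0, 22, -11, 0, 0, 0, 0, 9, 9, -13, 8, -1, -9, 0, 0],
    [0, 0, 11, -4, 0, 0, 0, 0, 4, 4, -7, 4, 0, -4, 0, 0],
    [0, 0, -26, 13, -1, 2, -1, -1, -10, -12, 15, -9, 2, 10, 0, 0],
    [0, 0, -6, 3, 2, -1, 0, 0, -3, -2, 4, -2, 0, 2, 0, 0],
    [0, 1, -24, 12, 0, 0, 0, 0, -9, -10, 14, -9, 2, 9, 0, 0],
    [0, 0, 2, -1, 0, 0, 0, 0, 1, 1, -1, 1, 0, -1, -1, 0],
    [0, 0, -4, 2, 0, 0, 0, 0, -1, -2, 2, -2, 0, 2, 2, -1],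
    [0, 0, -4, 2, 0, 0, 0, 0, -3, -1, 3, -2, 1, 1, -1, 2]]"

definition N_E8 :: "int list list" where
  "N_E8 =
   [[0, -5, 1, 0, 0, -4, 0, 0, 0, -10, -7, -13, -9, -8, -6, 0],
    [0, 1, 0, 0, 1, 2, 0, 1, 0, 1, 0, 0, 0, 1, 0, 0],
    [1, 2, 0, 0, 0, 2, 0, 1, 0, 5, 4, 7, 5, 5, 3, 0],
    [0, -6, 0, 0, 0, -4, 1, 0, 0, -10, -8, -13, -9, -9, -6, 0],
    [0, -2, 0, 1, 0, -1, 0, 0, 0, -4, -4, -7, -6, -5, -3, 0],
    [0, -1, 0, 0, 0, -1, 0, 0, 1, -1, 0, 0, 0, 0, 0, 1]]"

definition phi_E8 :: "int list list" where
  "phi_E8 =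
   [[0, 0, 1, 0, 0, 0, 0, 0, 0, 0, 0, 0, 0, 0, 0, 0],
    [0, 0, 0, 0, 1, 0, 0, 0, 0, 0, 0, 0, 0, 0, 0, 0],
    [1, 0, 0, 0, 0, 0, 0, 0, 0, 0, 0, 0, 0, 0, 0, 0],
    [0, 0, 0, 0, 0, 0, 1, 0, 0, 0, 0, 0, 0, 0, 0, 0],
    [0, 0, 0, 1, 0, 0, 0, 0, 0, 0, 0, 0, 0, 0, 0, 0],
    [0, 0, 0, 0, 0, 0, 0, 0, 0, 0, 0, 0, 0, 0, 0, 1]]"

definition R_E8 :: "int list list" where
  "R_E8 =
   [[0, 0, 0, 0, 0, 0, 0, 0, 0, 0],
    [-11, -876, 1418, -246, 668, 507, -1336, 2070, 1602, 980],
    [0, 0, 0, 0, 0, 0, 0, 0, 0, 0],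
    [0, 0, 0, 0, 0, 0, 0, 0, 0, 0],
    [0, 0, 0, 0, 0, 0, 0, 0, 0, 0],
    [-8, -620, 980, -196, 520, 326, -1040, 1608, 1242, 764],
    [0, 0, 0, 0, 0, 0, 0, 0, 0, 0],
    [0, 47, -94, 0, 0, -47, 0, 0, 0, 0],
    [0, 0, 0, 0, 0, 0, 0, 188, 94, 0],
    [-19, -1496, 2304, -348, 1188, 927, -2470, 4148, 3126, 1838],
    [-16, -1240, 1960, -298, 1040, 840, -2080, 3592, 2672, 1528],
    [-26, -2015, 3138, -402, 1690, 1365, -3380, 5696, 4248, 2436],
    [-18, -1395, 2158, -206, 1170, 945, -2340, 4182, 3100, 1766],
    [-17, -1341, 2012, -252, 1058, 822, -2210, 3746, 2792, 1600],
    [-12, -930, 1470, -200, 780, 630, -1560, 2600, 2004, 1146],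
    [0, 0, 0, 0, 0, 0, 0, 0, 0, 0]]"

definition NG_E8 :: "int list list" where
  "NG_E8 =
   [[116, -16, -58, 120, 38, 28],
    [-16, 8, 10, -20, -4, -4],
    [-58, 10, 32, -64, -22, -14],
    [120, -20, -64, 132, 42, 30],
    [38, -4, -22, 42, 20, 10],
    [28, -4, -14, 30, 10, 8]]"

lemma achiral_U_A2_D4_E8: "achiral (U_lat \<oplus>\<^sub>L A2_lat \<oplus>\<^sub>L D4_lat \<oplus>\<^sub>L E8_lat)"
  by (rule achiral_if_certificate[where g = "gram g_E8" and A = "gram A_E8"
        and lam = "gram lam_E8" and mu = "gram mu_E8" and C = "gram C_E8"
        and F = "gram F_E8" and Fm = "gram Fm_E8" and m = 9
        and N = "gram N_E8" and phi = "gram phi_E8" and R = "gram R_E8" and D = 94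
        and NG = "gram NG_E8" and r = 6];
      (unfold certificate_code)?; code_simp)

definition g_D4_D4 :: "int list list" where
  "g_D4_D4 =
   [[37, -12, -12, 0, -6, 24, -6, -12, 18, 6, -12, 0],
    [-108, 37, 36, 0, 18, -72, 18, 36, -54, -18, 36, 0],
    [24, -8, -7, 0, -4, 16, -4, -8, 12, 4, -8, 0],
    [12, -4, -4, 1, -2, 8, -2, -4, 6, 2, -4, 0],
    [-27, 9, 9, 0, 5, -18, 5, 9, -14, -4, 9, 0],
    [-72, 24, 24, 0, 12, -47, 12, 24, -36, -12, 24, 0],
    [-27, 9, 9, 0, 5, -18, 5, 9, -13, -5, 9, 0],
    [-18, 6, 6, 0, 3, -12, 3, 7, -9, -3, 6, 0],
    [-54, 18, 18, 0, 9, -36, 9, 18, -26, -9, 18, 0],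
    [-54, 18, 18, 0, 10, -36, 8, 18, -26, -9, 18, 0],
    [-9, 3, 3, 0, 2, -6, 1, 3, -4, -2, 4, 0],
    [-27, 9, 9, 0, 5, -18, 4, 9, -13, -5, 9, 1]]"

definition A_D4_D4 :: "int list list" where
  "A_D4_D4 =
   [[-108, 37, 36, 0, 18, -72, 18, 36, -54, -18, 36, 0],
    [37, -12, -12, 0, -6, 24, -6, -12, 18, 6, -12, 0],
    [36, -12, -10, -1, -6, 24, -6, -12, 18, 6, -12, 0],
    [0, 0, -1, 2, 0, 0, 0, 0, 0, 0, 0, 0],
    [18, -6, -6, 0, -2, 11, -2, -6, 8, 4, -6, 0],
    [-72, 24, 24, 0, 11, -46, 11, 23, -36, -12, 24, 0],
    [18, -6, -6, 0, -2, 11, -2, -6, 10, 2, -6, 0],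
    [36, -12, -12, 0, -6, 23, -6, -10, 18, 6, -12, 0],
    [-54, 18, 18, 0, 8, -36, 10, 18, -26, -9, 18, 0],
    [-18, 6, 6, 0, 4, -12, 2, 6, -9, -2, 5, -1],
    [36, -12, -12, 0, -6, 24, -6, -12, 18, 5, -10, 0],
    [0, 0, 0, 0, 0, 0, 0, 0, 0, -1, 0, 2]]"

definition lam_D4_D4 :: "int list list" where
  "lam_D4_D4 =
   [[0, 2, 0, 0, 0, 0, 0, 0, 0, 0, 0, 0],
    [2, 0, 0, 0, 0, 0, 0, 0, 0, 0, 0, 0],
    [1, 0, 0, 0, 0, 1, 0, 1, 0, 0, 2, 0],
    [2, 0, 1, 0, 0, 2, 0, 2, 0, 0, 1, 0],
    [0, 0, 0, 0, 1, 2, 2, 1, 0, 2, 1, 1],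
    [0, 0, 0, 0, 2, 1, 2, 2, 0, 0, 0, 0],
    [0, 0, 0, 0, 2, 2, 1, 1, 0, 1, 2, 2],
    [0, 0, 0, 0, 1, 2, 1, 2, 0, 0, 0, 0],
    [0, 0, 0, 0, 0, 0, 0, 0, 2, 2, 1, 1],
    [0, 0, 0, 0, 2, 0, 1, 0, 2, 0, 0, 0],
    [0, 0, 0, 0, 1, 0, 2, 0, 1, 0, 1, 0],
    [0, 0, 0, 0, 1, 0, 2, 0, 1, 0, 0, 1]]"

definition mu_D4_D4 :: "int list list" where
  "mu_D4_D4 =
   [[12, -4, -4, 0, -2, 8, -2, -4, 6, 2, -4, 0],
    [-36, 12, 12, 0, 6, -24, 6, 12, -18, -6, 12, 0],
    [8, -3, -2, 0, -1, 5, -1, -3, 4, 2, -4, 0],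
    [4, -2, -2, 1, 0, 2, 0, -2, 2, 1, -2, 0],
    [-9, 3, 3, 0, 2, -6, 1, 3, -4, -2, 3, 0],
    [-24, 8, 8, 0, 3, -14, 3, 7, -12, -4, 8, 0],
    [-9, 3, 3, 0, 1, -6, 2, 3, -4, -1, 2, -1],
    [-6, 2, 2, 0, 1, -4, 1, 2, -3, -1, 2, 0],
    [-18, 6, 6, 0, 3, -12, 3, 6, -9, -3, 6, 0],
    [-18, 6, 6, 0, 2, -11, 2, 6, -10, -2, 6, 0],
    [-3, 1, 1, 0, 0, -1, -1, 1, -2, 0, 1, 0],
    [-9, 3, 3, 0, 1, -5, 0, 3, -5, -1, 3, 0]]"

definition C_D4_D4 :: "int list list" where
  "C_D4_D4 =
   [[0, 6, 0, 0, 0, 0, 0, 0, 0, 0, 0, 0],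
    [6, 0, 0, 0, 0, 0, 0, 0, 0, 0, 0, 0],
    [0, 0, 4, 2, 0, 0, 0, 0, 0, 0, 0, 0],
    [0, 0, 2, 4, 0, 0, 0, 0, 0, 0, 0, 0],
    [0, 0, 0, 0, 6, 6, 3, 3, 0, 0, 0, 0],
    [0, 0, 0, 0, 6, 12, 6, 6, 0, 0, 0, 0],
    [0, 0, 0, 0, 3, 6, 6, 3, 0, 0, 0, 0],
    [0, 0, 0, 0, 3, 6, 3, 6, 0, 0, 0, 0],
    [0, 0, 0, 0, 0, 0, 0, 0, 6, 6, 3, 3],
    [0, 0, 0, 0, 0, 0, 0, 0, 6, 12, 6, 6],
    [0, 0, 0, 0, 0, 0, 0, 0, 3, 6, 6, 3],
    [0, 0, 0, 0, 0, 0, 0, 0, 3, 6, 3, 6]]"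

definition F_D4_D4 :: "int list list" where
  "F_D4_D4 =
   [[-18, 54, -12, -6, 13, 36, 14, 9, 25, 24, 3, 10],
    [0, 0, 0, 1, 0, 0, 0, 0, 0, 0, 0, 0],
    [1, 3, 0, 0, 0, 0, 0, 0, 0, 0, 0, 0],
    [0, 2, 0, 0, 0, 1, 0, 0, 0, 0, 0, 0],
    [0, -1, 0, 0, 1, 0, 1, 0, 0, 0, 0, 0],
    [0, -1, 0, 0, 0, 0, 0, 1, 0, 0, 0, 0],
    [0, 2, 0, 0, -1, 0, 0, 0, 1, 0, 0, 0],
    [0, 0, 0, 0, 1, 0, 0, 0, 0, 1, 0, 0],
    [0, -1, 0, 0, 0, 0, 0, 0, 0, 0, 1, 0],
    [0, 0, 0, 0, 0, 0, 0, 0, 0, 0, 0, 1]]"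

definition Fm_D4_D4 :: "int list list" where
  "Fm_D4_D4 =
   [[54, -18, -18, 0, -10, 36, -8, -18, 26, 10, -18, -4],
    [0, 0, -1, 2, 0, 0, 0, 0, 0, 0, 0, 0],
    [3, 1, 0, 0, 0, 0, 0, 0, 0, 0, 0, 0],
    [2, 0, 0, 0, -1, 2, -1, -1, 0, 0, 0, 0],
    [-1, 0, 0, 0, 2, -2, 2, 0, 0, 0, 0, 0],
    [-1, 0, 0, 0, 0, -1, 0, 2, 0, 0, 0, 0],
    [2, 0, 0, 0, -2, 1, 0, 0, 2, -1, 0, 0],
    [0, 0, 0, 0, 2, -1, 0, 0, -1, 2, -1, -1],
    [-1, 0, 0, 0, 0, 0, 0, 0, 0, -1, 2, 0],
    [0, 0, 0, 0, 0, 0, 0, 0, 0, -1, 0, 2]]"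

definition N_D4_D4 :: "int list list" where
  "N_D4_D4 =
   [[-6, 18, -4, -2, 9, 12, 0, 3, 9, 0, -3, 0],
    [0, 0, 0, 0, -1, 0, 1, 0, 0, 2, 1, 1]]"

definition phi_D4_D4 :: "int list list" where
  "phi_D4_D4 =
   [[-78, 26, 26, 0, 13, -52, 13, 24, -36, -12, 24, 0],
    [0, 0, 0, 0, 0, 0, 0, 0, 0, 0, 0, 1]]"

definition R_D4_D4 :: "int list list" where
  "R_D4_D4 =
   [[-104, 0, 0, -144, -20, -144, 8, -96, -120, -256],
    [312, 0, 12, 432, 60, 432, -24, 288, 360, 768],
    [-70, 0, -12, -72, -4, -90, 22, -48, -78, -164],
    [-35, 6, -6, -36, -2, -45, 11, -24, -39, -82],
    [156, 0, 0, 228, 36, 222, -6, 156, 186, 396],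
    [208, 0, 0, 312, 52, 300, -16, 192, 240, 512],
    [0, 0, 0, 12, 12, 6, -6, -12, -6, -12],
    [52, 0, 0, 84, 16, 84, -4, 48, 60, 128],
    [156, 0, 0, 216, 30, 216, 0, 156, 186, 390],
    [0, 0, 0, 0, 0, 0, 0, 0, 0, -12],
    [-52, 0, 0, -72, -10, -72, 4, -48, -54, -134],
    [0, 0, 0, 0, 0, 0, 0, 0, 0, 0]]"

definition NG_D4_D4 :: "int list list" where
  "NG_D4_D4 =
   [[168, -36],
    [-36, 8]]"

lemma achiral_U_A2_D4_D4: "achiral (U_lat \<oplus>\<^sub>L A2_lat \<oplus>\<^sub>L D4_lat \<oplus>\<^sub>L D4_lat)"
  by (rule achiral_if_certificate[where g = "gram g_D4_D4" and A = "gram A_D4_D4"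
        and lam = "gram lam_D4_D4" and mu = "gram mu_D4_D4" and C = "gram C_D4_D4"
        and F = "gram F_D4_D4" and Fm = "gram Fm_D4_D4" and m = 9
        and N = "gram N_D4_D4" and phi = "gram phi_D4_D4" and R = "gram R_D4_D4" and D = 12
        and NG = "gram NG_D4_D4" and r = 2];
      (unfold certificate_code)?; code_simp)

definition g_E6 :: "int list list" where
  "g_E6 =
   [[1, 0, 0, 0, 0, 0, 0, 0],
    [0, 1, 0, 0, 0, 0, 0, 0],
    [0, 0, 0, 0, 0, 0, 0, 1],
    [0, 0, 0, 1, 0, 0, 0, 0],
    [0, 0, 0, 0, 0, 0, 1, 0],
    [0, 0, 0, 0, 0, 1, 0, 0],
    [0, 0, 0, 0, 1, 0, 0, 0],
    [0, 0, 1, 0, 0, 0, 0, 0]]"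

definition A_E6 :: "int list list" where
  "A_E6 =
   [[0, 1, 0, 0, 0, 0, 0, 0],
    [1, 0, 0, 0, 0, 0, 0, 0],
    [0, 0, 0, 0, 0, 0, -2, 4],
    [0, 0, 0, 4, 0, -2, 0, 0],
    [0, 0, 0, 0, 0, -2, 4, -2],
    [0, 0, 0, -2, -2, 4, -2, 0],
    [0, 0, -2, 0, 4, -2, 0, 0],
    [0, 0, 4, 0, -2, 0, 0, 0]]"

definition lam_E6 :: "int list list" where
  "lam_E6 =
   [[0, 2, 0, 0, 0, 0, 0, 0],
    [2, 0, 0, 0, 0, 0, 0, 0],
    [0, 0, 2, 1, 2, 2, 1, 0],
    [0, 0, 2, 2, 1, 0, 0, 0],
    [0, 0, 0, 2, 0, 1, 0, 0],
    [0, 0, 1, 0, 2, 0, 0, 0],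
    [0, 0, 0, 2, 0, 1, 0, 0],
    [0, 0, 2, 1, 2, 2, 1, 0]]"

definition mu_E6 :: "int list list" where
  "mu_E6 =
   [[0, 0, 0, 0, 0, 0, 0, 0],
    [0, 0, 0, 0, 0, 0, 0, 0],
    [0, 0, -1, 0, 0, 0, 0, 1],
    [0, 0, -2, -2, 0, 2, 0, 0],
    [0, 0, 0, -2, 1, 0, 1, 0],
    [0, 0, 0, 0, -2, 2, 0, 0],
    [0, 0, 0, -2, 1, 0, 1, 0],
    [0, 0, -1, 0, 0, 0, 0, 1]]"

definition C_E6 :: "int list list" where
  "C_E6 =
   [[0, 6, 0, 0, 0, 0, 0, 0],
    [6, 0, 0, 0, 0, 0, 0, 0],
    [0, 0, 4, 3, 5, 6, 4, 2],
    [0, 0, 3, 6, 6, 9, 6, 3],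
    [0, 0, 5, 6, 10, 12, 8, 4],
    [0, 0, 6, 9, 12, 18, 12, 6],
    [0, 0, 4, 6, 8, 12, 10, 5],
    [0, 0, 2, 3, 4, 6, 5, 4]]"

definition F_E6 :: "int list list" where
  "F_E6 =
   [[1, -1, 0, 0, 0, 0, 0, 0],
    [0, 0, 0, 1, 0, 0, 0, 0],
    [0, 1, 0, 0, 0, 0, 0, 0],
    [0, 0, 0, 0, 0, 1, 0, 0],
    [0, 0, 0, 0, 1, 0, 1, 0],
    [0, 0, 1, 0, 0, 0, 0, 1]]"

definition Fm_E6 :: "int list list" where
  "Fm_E6 =
   [[-1, 1, 0, 0, 0, 0, 0, 0],
    [0, 0, 0, 4, 0, -2, 0, 0],
    [1, 0, 0, 0, 0, 0, 0, 0],
    [0, 0, 0, -2, -2, 4, -2, 0],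
    [0, 0, -2, 0, 4, -4, 4, -2],
    [0, 0, 4, 0, -2, 0, -2, 4]]"

definition N_E6 :: "int list list" where
  "N_E6 =
   [[0, 0, 0, 0, -1, 0, 1, 0],
    [0, 0, -1, 0, 0, 0, 0, 1]]"

definition phi_E6 :: "int list list" where
  "phi_E6 =
   [[0, 0, 0, 0, 0, 0, 1, 0],
    [0, 0, 0, 0, 0, 0, 0, 1]]"

definition R_E6 :: "int list list" where
  "R_E6 =
   [[0, 0, 2, 0, 0, 0],
    [2, 0, 2, 0, 0, 0],
    [0, 2, 0, 4, 3, 2],
    [0, 2, 0, 3, 2, 1],
    [0, 4, 0, 8, 6, 3],
    [0, 3, 0, 6, 4, 2],
    [0, 0, 0, 0, 0, 0],
    [0, 0, 0, 0, 0, 0]]"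

definition NG_E6 :: "int list list" where
  "NG_E6 =
   [[8, -4],
    [-4, 8]]"

lemma achiral_U_E6_2: "achiral (U_lat \<oplus>\<^sub>L scaleL 2 E6_lat)"
  by (rule achiral_if_certificate[where g = "gram g_E6" and A = "gram A_E6"
        and lam = "gram lam_E6" and mu = "gram mu_E6" and C = "gram C_E6"
        and F = "gram F_E6" and Fm = "gram Fm_E6" and m = 5
        and N = "gram N_E6" and phi = "gram phi_E6" and R = "gram R_E6" and D = 2
        and NG = "gram NG_E6" and r = 2];
      (unfold certificate_code)?; code_simp)

theorem proposition3p7:
  shows "achiral (U_lat \<oplus>\<^sub>L A2_lat \<oplus>\<^sub>L D4_lat \<oplus>\<^sub>L E8_lat)
    \<and> achiral (U_lat \<oplus>\<^sub>L A2_lat \<oplus>\<^sub>L D4_lat \<oplus>\<^sub>L D4_lat)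
    \<and> achiral (U_lat \<oplus>\<^sub>L scaleL 2 E6_lat)"
  using achiral_U_A2_D4_E8 achiral_U_A2_D4_D4 achiral_U_E6_2 by blast

end
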